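(* Let $n\ge 1$, let $a_1,\dots,a_n$ be distinct real numbers, and let $F(a)=\sum_{k=0}^n A_k a^k=\prod_{i=1}^n(a-a_i)$. Fix signs $\epsilon_i\in\{\pm1\}$ and real numbers $\xi_1,\dots,\xi_n,\nu_n$, put $\Delta_i=\epsilon_i(a-a_i)$ and $$x(a)=\frac{\nu_n}{2}\,a+\sum_{i=1}^n\frac{\xi_i}{\sqrt{\Delta_i}},$$ and work on an open interval $I\subset(0,\infty)$ on which all $\Delta_i>0$ and $\dot x=dx/da\neq0$. On $M=I\times\mathbb{R}$ with coordinates $(a,y)$ consider $H=\Pi^2+a\,P_y^2$ with $\Pi=\frac{a}{\dot x}P_a$. Define $$G=\sum_{k=0}^n A_{n-k}H^{n-k}P_y^{2k+1},\quad Q_1=\sum_{k=0}^n\tilde b_k\,H^{n-k}\,\Pi\,P_y^{2k},\quad Q_2=\sum_{k=0}^n\tilde c_k\,H^{n-k}P_y^{2k+1},$$ where for $k=0,\dots,n$ $$\tilde b_k=(-1)^k\Big(\nu_n\sigma_k+\sum_{i=1}^n\frac{\xi_i}{\sqrt{\Delta_i}}\sigma^i_{k-1}\Big),$$ $$\tilde c_k=\frac{(-1)^{k+1}}{2}\Big\{\nu_n^2\,a\,\sigma_k+2\nu_n\sum_{i=1}^n\frac{\xi_i}{\sqrt{\Delta_i}}\big(\sigma^i_k+a\,\sigma^i_{k-1}\big)+\sum_{i=1}^n\frac{\xi_i^2}{\Delta_i}\sigma^i_{k-1}+\sum_{i\neq j}\frac{\xi_i\xi_j}{\sqrt{\Delta_i\Delta_j}}\big(\sigma^{ij}_{k-1}+a\,\sigma^{ij}_{k-2}\big)\Big\},$$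 and set $S_1=Q_1+y\,G$, $S_2=Q_2+y\,Q_1+\frac{y^2}{2}G$. Then $\{H,P_y\}=\{H,S_1\}=\{H,S_2\}=0$ and each of the triples $(H,P_y,S_1)$, $(H,P_y,S_2)$ is functionally independent; thus $\{H,P_y,S_1\}$ and $\{H,P_y,S_2\}$ are two maximally superintegrable systems.
   Context: $\{\cdot,\cdot\}$ is the canonical Poisson bracket on $T^*M$, $(P_a,P_y)$ the momenta conjugate to $(a,y)$; $H$ is the geodesic Hamiltonian of $g=\dot x^2a^{-2}da^2+a^{-1}dy^2$. Symmetric functions of the roots: $\sigma_k$ ($0\le k\le n$) by $\prod_{i}(a-a_i)=\sum_{k=0}^n(-1)^k\sigma_k a^{n-k}$; for each $i$, $\sigma^i_m$ ($-1\le m\le n$) by $\prod_{l\neq i}(a-a_l)=\sum_{m=0}^{n-1}(-1)^m\sigma^i_m a^{n-1-m}$ with $\sigma^i_{-1}=\sigma^i_n=0$; for $i\neq j$, $\sigma^{ij}_m$ ($-2\le m\le n$) by $\prod_{l\neq i,j}(a-a_l)=\sum_{m=0}^{n-2}(-1)^m\sigma^{ij}_m a^{n-2-m}$ with $\sigma^{ij}_{-2}=\sigma^{ij}_{-1}=\sigma^{ij}_{n-1}=\sigma^{ij}_n=0$. *)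

theory Defs
  imports "HOL-Analysis.Analysis" "HOL-Computational_Algebra.Polynomial"
begin

text \<open>Points of the cotangent bundle T*M, M = I x R, with canonical coordinates
  (a, y, P_a, P_y).\<close>
type_synonym phase = "real \<times> real \<times> real \<times> real"

definition d_a :: "(phase \<Rightarrow> real) \<Rightarrow> phase \<Rightarrow> real" where
  "d_a f p = (case p of (a, y, pa, py) \<Rightarrow> deriv (\<lambda>t. f (t, y, pa, py)) a)"
definition d_y :: "(phase \<Rightarrow> real) \<Rightarrow> phase \<Rightarrow> real" where
  "d_y f p = (case p of (a, y, pa, py) \<Rightarrow> deriv (\<lambda>t. f (a, t, pa, py)) y)"
definition d_Pa :: "(phase \<Rightarrow> real) \<Rightarrow> phase \<Rightarrow> real" where
  "d_Pa f p = (case p of (a, y, pa, py) \<Rightarrow> deriv (\<lambda>t. f (a, y, t, py)) pa)"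
definition d_Py :: "(phase \<Rightarrow> real) \<Rightarrow> phase \<Rightarrow> real" where
  "d_Py f p = (case p of (a, y, pa, py) \<Rightarrow> deriv (\<lambda>t. f (a, y, pa, t)) py)"

definition poisson :: "(phase \<Rightarrow> real) \<Rightarrow> (phase \<Rightarrow> real) \<Rightarrow> phase \<Rightarrow> real" where
  "poisson f g p = d_a f p * d_Pa g p - d_Pa f p * d_a g p
                 + d_y f p * d_Py g p - d_Py f p * d_y g p"

definition grad :: "(phase \<Rightarrow> real) \<Rightarrow> phase \<Rightarrow> nat \<Rightarrow> real" where
  "grad f p k = (if k = 0 then d_a f p else if k = 1 then d_y f p
                 else if k = 2 then d_Pa f p else d_Py f p)"

definition lin_indep3 :: "(nat \<Rightarrow> real) \<Rightarrow> (nat \<Rightarrow> real) \<Rightarrow> (nat \<Rightarrow> real) \<Rightarrow> bool" where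
  "lin_indep3 u v w \<longleftrightarrow>
     (\<forall>c1 c2 c3. (\<forall>k<4. c1 * u k + c2 * v k + c3 * w k = 0) \<longrightarrow> c1 = 0 \<and> c2 = 0 \<and> c3 = 0)"

text \<open>Functional independence of three functions on a domain D: their differentials
  are linearly independent on a dense subset of D (open by continuity).\<close>
definition fun_indep3 :: "phase set \<Rightarrow> (phase \<Rightarrow> real) \<Rightarrow> (phase \<Rightarrow> real) \<Rightarrow> (phase \<Rightarrow> real) \<Rightarrow> bool" where
  "fun_indep3 D f g h \<longleftrightarrow>
     D \<subseteq> closure {p \<in> D. lin_indep3 (grad f p) (grad g p) (grad h p)}"

text \<open>Symmetric functions of the roots r l, l in S, defined as in the paper through
  prod_{l in S} (a - r l) = sum_{m=0}^{|S|} (-1)^m sigma_m a^{|S|-m},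
  extended by 0 for m < 0 or m > |S|.\<close>
definition root_poly :: "(nat \<Rightarrow> real) \<Rightarrow> nat set \<Rightarrow> real poly" where
  "root_poly r S = (\<Prod>l\<in>S. [:- r l, 1:])"

definition sym :: "(nat \<Rightarrow> real) \<Rightarrow> nat set \<Rightarrow> int \<Rightarrow> real" where
  "sym r S m = (if m < 0 \<or> m > int (card S) then 0
               else (-1) ^ nat m * coeff (root_poly r S) (card S - nat m))"

abbreviation sigma :: "nat \<Rightarrow> (nat \<Rightarrow> real) \<Rightarrow> int \<Rightarrow> real" where
  "sigma n r m \<equiv> sym r {1..n} m"
abbreviation sigma1 :: "nat \<Rightarrow> (nat \<Rightarrow> real) \<Rightarrow> nat \<Rightarrow> int \<Rightarrow> real" where
  "sigma1 n r i m \<equiv> sym r ({1..n} - {i}) m"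
abbreviation sigma2 :: "nat \<Rightarrow> (nat \<Rightarrow> real) \<Rightarrow> nat \<Rightarrow> nat \<Rightarrow> int \<Rightarrow> real" where
  "sigma2 n r i j m \<equiv> sym r ({1..n} - {i, j}) m"

definition Acoef :: "nat \<Rightarrow> (nat \<Rightarrow> real) \<Rightarrow> nat \<Rightarrow> real" where
  "Acoef n r k = coeff (root_poly r {1..n}) k"

definition Delta :: "(nat \<Rightarrow> real) \<Rightarrow> (nat \<Rightarrow> real) \<Rightarrow> nat \<Rightarrow> real \<Rightarrow> real" where
  "Delta eps r i a = eps i * (a - r i)"

definition xfun :: "nat \<Rightarrow> (nat \<Rightarrow> real) \<Rightarrow> (nat \<Rightarrow> real) \<Rightarrow> (nat \<Rightarrow> real) \<Rightarrow> real \<Rightarrow> real \<Rightarrow> real" where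
  "xfun n r eps xi nu a = nu / 2 * a + (\<Sum>i=1..n. xi i / sqrt (Delta eps r i a))"

definition xdot :: "nat \<Rightarrow> (nat \<Rightarrow> real) \<Rightarrow> (nat \<Rightarrow> real) \<Rightarrow> (nat \<Rightarrow> real) \<Rightarrow> real \<Rightarrow> real \<Rightarrow> real" where
  "xdot n r eps xi nu a = deriv (xfun n r eps xi nu) a"

definition PiF :: "nat \<Rightarrow> (nat \<Rightarrow> real) \<Rightarrow> (nat \<Rightarrow> real) \<Rightarrow> (nat \<Rightarrow> real) \<Rightarrow> real \<Rightarrow> phase \<Rightarrow> real" where
  "PiF n r eps xi nu p = (case p of (a, y, pa, py) \<Rightarrow> a / xdot n r eps xi nu a * pa)"

definition Py :: "phase \<Rightarrow> real" where
  "Py p = (case p of (a, y, pa, py) \<Rightarrow> py)"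

definition HF :: "nat \<Rightarrow> (nat \<Rightarrow> real) \<Rightarrow> (nat \<Rightarrow> real) \<Rightarrow> (nat \<Rightarrow> real) \<Rightarrow> real \<Rightarrow> phase \<Rightarrow> real" where
  "HF n r eps xi nu p = (case p of (a, y, pa, py) \<Rightarrow> (PiF n r eps xi nu p)^2 + a * py^2)"

definition GF :: "nat \<Rightarrow> (nat \<Rightarrow> real) \<Rightarrow> (nat \<Rightarrow> real) \<Rightarrow> (nat \<Rightarrow> real) \<Rightarrow> real \<Rightarrow> phase \<Rightarrow> real" where
  "GF n r eps xi nu p =
     (\<Sum>k=0..n. Acoef n r (n - k) * (HF n r eps xi nu p)^(n - k) * (Py p)^(2*k+1))"

definition btil :: "nat \<Rightarrow> (nat \<Rightarrow> real) \<Rightarrow> (nat \<Rightarrow> real) \<Rightarrow> (nat \<Rightarrow> real) \<Rightarrow> real \<Rightarrow> nat \<Rightarrow> real \<Rightarrow> real" where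
  "btil n r eps xi nu k a = (-1)^k * (nu * sigma n r (int k)
      + (\<Sum>i=1..n. xi i / sqrt (Delta eps r i a) * sigma1 n r i (int k - 1)))"

definition ctil :: "nat \<Rightarrow> (nat \<Rightarrow> real) \<Rightarrow> (nat \<Rightarrow> real) \<Rightarrow> (nat \<Rightarrow> real) \<Rightarrow> real \<Rightarrow> nat \<Rightarrow> real \<Rightarrow> real" where
  "ctil n r eps xi nu k a = (-1)^(k+1) / 2 *
     ( nu^2 * a * sigma n r (int k)
     + 2 * nu * (\<Sum>i=1..n. xi i / sqrt (Delta eps r i a)
                    * (sigma1 n r i (int k) + a * sigma1 n r i (int k - 1)))
     + (\<Sum>i=1..n. (xi i)^2 / Delta eps r i a * sigma1 n r i (int k - 1))
     + (\<Sum>i=1..n. \<Sum>j\<in>{1..n} - {i}. xi i * xi j / sqrt (Delta eps r i a * Delta eps r j a)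
                    * (sigma2 n r i j (int k - 1) + a * sigma2 n r i j (int k - 2))))"

definition Q1F :: "nat \<Rightarrow> (nat \<Rightarrow> real) \<Rightarrow> (nat \<Rightarrow> real) \<Rightarrow> (nat \<Rightarrow> real) \<Rightarrow> real \<Rightarrow> phase \<Rightarrow> real" where
  "Q1F n r eps xi nu p = (case p of (a, y, pa, py) \<Rightarrow>
     (\<Sum>k=0..n. btil n r eps xi nu k a * (HF n r eps xi nu p)^(n - k)
                 * PiF n r eps xi nu p * py^(2*k)))"

definition Q2F :: "nat \<Rightarrow> (nat \<Rightarrow> real) \<Rightarrow> (nat \<Rightarrow> real) \<Rightarrow> (nat \<Rightarrow> real) \<Rightarrow> real \<Rightarrow> phase \<Rightarrow> real" where
  "Q2F n r eps xi nu p = (case p of (a, y, pa, py) \<Rightarrow>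
     (\<Sum>k=0..n. ctil n r eps xi nu k a * (HF n r eps xi nu p)^(n - k) * py^(2*k+1)))"

definition S1F :: "nat \<Rightarrow> (nat \<Rightarrow> real) \<Rightarrow> (nat \<Rightarrow> real) \<Rightarrow> (nat \<Rightarrow> real) \<Rightarrow> real \<Rightarrow> phase \<Rightarrow> real" where
  "S1F n r eps xi nu p = (case p of (a, y, pa, py) \<Rightarrow>
     Q1F n r eps xi nu p + y * GF n r eps xi nu p)"

definition S2F :: "nat \<Rightarrow> (nat \<Rightarrow> real) \<Rightarrow> (nat \<Rightarrow> real) \<Rightarrow> (nat \<Rightarrow> real) \<Rightarrow> real \<Rightarrow> phase \<Rightarrow> real" where
  "S2F n r eps xi nu p = (case p of (a, y, pa, py) \<Rightarrow>
     Q2F n r eps xi nu p + y * Q1F n r eps xi nu p + y^2 / 2 * GF n r eps xi nu p)"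

end

theory Submission
  imports Defs
begin

(* Put q = P_y^2 and F_S(h, q) = prod_{l in S} (h - a_l q).  The coefficient sums collapse to root
   products: G = P_y F_N(H, q), Q1 = Pi B and Q2 = P_y C, where B and C are combinations of the
   F_{N - {i}} and F_{N - {i, j}} with coefficients nu and u_i = xi_i / sqrt Delta_i.  The Euler
   relation (a - a_i) u_i' = - u_i / 2 and xdot = nu/2 + sum_i u_i' give, at fixed H and q,
     q B - 2 (H - a q) dB/da = 2 xdot q F_N   and   dC/da = - xdot B.
   For K = K(a, H, P_y) one has {H, K} = - (dH/dP_a) dK/da, and {H, Pi} = a q / xdot for
   Pi = a P_a / xdot; hence {H, G} = 0, {H, Q1} = 2 a P_y G and {H, Q2} = 2 a P_y Q1.  Since
   G, Q1, Q2 do not depend on y and {H, y} = - 2 a P_y, the polynomials S1 = Q1 + y G and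
   S2 = Q2 + y Q1 + y^2/2 G commute with H.
   For independence: dH has no y-component, dP_y is the last coordinate covector, and the
   y-components of dS1, dS2 are G and S1.  So the differentials are independent wherever P_a, G
   and S1 are nonzero, which happens on a dense set: for P_y /= 0, G is a nonzero polynomial in
   P_a, and S1 is affine in y with slope G. *)

section \<open>Homogenised root products\<close>

definition root_prod :: "(nat \<Rightarrow> real) \<Rightarrow> nat set \<Rightarrow> real \<Rightarrow> real \<Rightarrow> real" where
  "root_prod r S h q = (\<Prod>l\<in>S. h - r l * q)"

lemma root_prod_remove:
  "finite S \<Longrightarrow> i \<in> S \<Longrightarrow> root_prod r S h q = (h - r i * q) * root_prod r (S - {i}) h q"
  unfolding root_prod_def by (rule prod.remove)

lemma degree_root_poly_le: "finite S \<Longrightarrow> degree (root_poly r S) \<le> card S"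
proof -
  assume "finite S"
  hence "degree (root_poly r S) \<le> sum (degree \<circ> (\<lambda>l. [:- r l, 1:])) S"
    unfolding root_poly_def by (rule degree_prod_sum_le)
  thus ?thesis by simp
qed

lemma root_prod_eq_coeff_sum:
  assumes "finite S"
  shows "root_prod r S h q = (\<Sum>j\<le>card S. coeff (root_poly r S) j * h^j * q^(card S - j))"
  using assms
proof (induction S rule: finite_induct)
  case empty
  then show ?case by (simp add: root_prod_def root_poly_def)
next
  case (insert x S)
  let ?c = "root_poly r S" and ?m = "card S"
  have c_big: "coeff ?c (Suc ?m) = 0"
    using degree_root_poly_le[OF insert(1), of r] by (intro coeff_eq_0) simp
  have rp: "root_poly r (insert x S) = smult (- r x) ?c + pCons 0 ?c"
    using insert by (simp add: root_poly_def mult_pCons_left)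
  have "(\<Sum>j\<le>Suc ?m. coeff (root_poly r (insert x S)) j * h^j * q^(Suc ?m - j))
      = (\<Sum>j\<le>Suc ?m. (- r x) * coeff ?c j * h^j * q^(Suc ?m - j))
        + (\<Sum>j\<le>Suc ?m. coeff (pCons 0 ?c) j * h^j * q^(Suc ?m - j))"
    unfolding rp coeff_add coeff_smult sum.distrib[symmetric]
    by (rule sum.cong) (simp_all add: algebra_simps)
  also have "(\<Sum>j\<le>Suc ?m. (- r x) * coeff ?c j * h^j * q^(Suc ?m - j))
      = (- r x * q) * (\<Sum>j\<le>?m. coeff ?c j * h^j * q^(?m - j))"
    using c_big by (simp add: sum_distrib_left Suc_diff_le algebra_simps)
  also have "(\<Sum>j\<le>Suc ?m. coeff (pCons 0 ?c) j * h^j * q^(Suc ?m - j))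
      = h * (\<Sum>j\<le>?m. coeff ?c j * h^j * q^(?m - j))"
    by (simp add: sum.atMost_Suc_shift sum_distrib_left algebra_simps del: sum.atMost_Suc)
  finally show ?case
    using insert by (simp add: root_prod_def algebra_simps)
qed

definition hom_poly :: "nat \<Rightarrow> (nat \<Rightarrow> real) \<Rightarrow> real \<Rightarrow> real \<Rightarrow> real" where
  "hom_poly n c h q = (\<Sum>k=0..n. c k * h^(n-k) * q^k)"

lemma hom_poly_cong: "(\<And>k. k \<le> n \<Longrightarrow> c k = d k) \<Longrightarrow> hom_poly n c h q = hom_poly n d h q"
  unfolding hom_poly_def by (intro sum.cong) auto

lemma hom_poly_sym:
  assumes S: "finite S" and le: "card S + d \<le> n"
  shows "hom_poly n (\<lambda>k. (-1)^k * sym r S (int k - int d)) h q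
       = (-1)^d * q^d * h^(n - card S - d) * root_prod r S h q"
proof -
  let ?m = "card S"
  let ?f = "\<lambda>k. (-1)^k * sym r S (int k - int d) * h^(n-k) * q^k"
  have "hom_poly n (\<lambda>k. (-1)^k * sym r S (int k - int d)) h q = (\<Sum>k=d..d+?m. ?f k)"
    unfolding hom_poly_def using le by (intro sum.mono_neutral_right) (auto simp: sym_def)
  also have "\<dots> = (\<Sum>j=0..?m. ?f (j+d))"
    using sum.shift_bounds_cl_nat_ivl[of ?f 0 d ?m] by (simp add: add.commute)
  also have "\<dots> = (\<Sum>j=0..?m. ((-1)^d * q^d * h^(n - ?m - d))
                      * (coeff (root_poly r S) (?m - j) * h^(?m-j) * q^j))"
  proof (rule sum.cong)
    fix j assume j: "j \<in> {0..?m}"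
    have "n - (j+d) = (n - ?m - d) + (?m - j)" using j le by simp
    hence h_pow: "h^(n - (j+d)) = h^(n - ?m - d) * h^(?m - j)" by (simp add: power_add)
    have sign: "(-1::real)^(j+d) * (-1)^j = (-1)^d"
      by (simp add: power_add mult_ac flip: power_mult_distrib)
    have "?f (j+d) = ((-1)^(j+d) * (-1)^j) * coeff (root_poly r S) (?m - j) * h^(n - (j+d)) * q^(j+d)"
      using j by (simp add: sym_def)
    then show "?f (j+d) = ((-1)^d * q^d * h^(n - ?m - d))
                      * (coeff (root_poly r S) (?m - j) * h^(?m-j) * q^j)"
      unfolding h_pow sign by (simp add: power_add algebra_simps)
  qed simp
  also have "\<dots> = ((-1)^d * q^d * h^(n - ?m - d))
                  * (\<Sum>j=0..?m. coeff (root_poly r S) j * h^j * q^(?m-j))"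
    by (subst sum.atLeastAtMost_rev) (auto simp: sum_distrib_left intro!: sum.cong)
  also have "\<dots> = (-1)^d * q^d * h^(n - ?m - d) * root_prod r S h q"
    using root_prod_eq_coeff_sum[OF S, of r h q] by (simp add: atLeast0AtMost)
  finally show ?thesis .
qed

lemma hom_poly_add: "hom_poly n (\<lambda>k. c k + d k) h q = hom_poly n c h q + hom_poly n d h q"
  unfolding hom_poly_def by (simp add: sum.distrib algebra_simps)

lemma hom_poly_diff: "hom_poly n (\<lambda>k. c k - d k) h q = hom_poly n c h q - hom_poly n d h q"
  unfolding hom_poly_def by (simp add: sum_subtractf algebra_simps)

lemma hom_poly_mult_left: "hom_poly n (\<lambda>k. x * c k) h q = x * hom_poly n c h q"
  unfolding hom_poly_def by (simp add: sum_distrib_left algebra_simps)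

lemma hom_poly_sum: "hom_poly n (\<lambda>k. \<Sum>i\<in>A. c i k) h q = (\<Sum>i\<in>A. hom_poly n (c i) h q)"
  unfolding hom_poly_def by (simp add: sum_distrib_right sum.swap[of _ A])

lemmas hom_poly_linear = hom_poly_add hom_poly_diff hom_poly_mult_left hom_poly_sum

lemma hom_poly_sigma: "hom_poly n (\<lambda>k. (-1)^k * sigma n r (int k)) h q = root_prod r {1..n} h q"
  using hom_poly_sym[of "{1..n}" 0 n r h q] by simp

lemma hom_poly_sigma1:
  "i \<in> {1..n} \<Longrightarrow>
   hom_poly n (\<lambda>k. (-1)^k * sigma1 n r i (int k)) h q = h * root_prod r ({1..n} - {i}) h q"
  using hom_poly_sym[of "{1..n} - {i}" 0 n r h q] by simp

lemma hom_poly_sigma1_shift: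
  "i \<in> {1..n} \<Longrightarrow>
   hom_poly n (\<lambda>k. (-1)^k * sigma1 n r i (int k - 1)) h q = - q * root_prod r ({1..n} - {i}) h q"
  using hom_poly_sym[of "{1..n} - {i}" 1 n r h q] by simp

lemma hom_poly_sigma2_shift1:
  "i \<in> {1..n} \<Longrightarrow> j \<in> {1..n} - {i} \<Longrightarrow>
   hom_poly n (\<lambda>k. (-1)^k * sigma2 n r i j (int k - 1)) h q = - q * h * root_prod r ({1..n} - {i, j}) h q"
proof -
  assume "i \<in> {1..n}" "j \<in> {1..n} - {i}"
  hence "card ({1..n} - {i, j}) = n - 2" "2 \<le> n" by (auto simp: card_Diff_subset)
  with hom_poly_sym[of "{1..n} - {i, j}" 1 n r h q] show ?thesis by simp
qed

lemma hom_poly_sigma2_shift2: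
  "i \<in> {1..n} \<Longrightarrow> j \<in> {1..n} - {i} \<Longrightarrow>
   hom_poly n (\<lambda>k. (-1)^k * sigma2 n r i j (int k - 2)) h q = q^2 * root_prod r ({1..n} - {i, j}) h q"
proof -
  assume "i \<in> {1..n}" "j \<in> {1..n} - {i}"
  hence "card ({1..n} - {i, j}) = n - 2" "2 \<le> n" by (auto simp: card_Diff_subset)
  with hom_poly_sym[of "{1..n} - {i, j}" 2 n r h q] show ?thesis by simp
qed

lemma hom_poly_Acoef: "hom_poly n (\<lambda>k. Acoef n r (n - k)) h q = root_prod r {1..n} h q"
proof -
  have "Acoef n r (n - k) = (-1)^k * sigma n r (int k)" if "k \<le> n" for k
    using that by (simp add: Acoef_def sym_def flip: power_mult_distrib)
  hence "hom_poly n (\<lambda>k. Acoef n r (n - k)) h q = hom_poly n (\<lambda>k. (-1)^k * sigma n r (int k)) h q"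
    by (rule hom_poly_cong)
  thus ?thesis by (simp only: hom_poly_sigma)
qed

lemma has_real_derivative_hom_poly:
  assumes coeff: "\<And>k. k \<le> n \<Longrightarrow> c k field_differentiable (at a)"
    and Dt: "((\<lambda>t. hom_poly n (\<lambda>k. c k t) (f a) q) has_real_derivative Dt) (at a)"
    and f: "(f has_real_derivative f') (at a)"
  shows "((\<lambda>t. hom_poly n (\<lambda>k. c k t) (f t) q) has_real_derivative
           Dt + deriv (\<lambda>h. hom_poly n (\<lambda>k. c k a) h q) (f a) * f') (at a)"
proof -
  define Kh where "Kh = (\<Sum>k=0..n. c k a * (real (n - k) * f a ^ (n - k - 1)) * q^k)"
  have termwise: "((\<lambda>t. hom_poly n (\<lambda>k. c k t) (g t) q) has_real_derivative
      hom_poly n c' (g x) q + (\<Sum>k=0..n. c k x * (real (n - k) * g x ^ (n - k - 1)) * q^k) * g') (at x)"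
    if "\<And>k. k \<le> n \<Longrightarrow> (c k has_real_derivative c' k) (at x)" "(g has_real_derivative g') (at x)"
    for c :: "nat \<Rightarrow> real \<Rightarrow> real" and c' g g' x
    unfolding hom_poly_def sum_distrib_right sum.distrib[symmetric]
    using that by (intro DERIV_sum) (auto intro!: derivative_eq_intros simp: algebra_simps)
  have coeff_deriv: "(c k has_real_derivative deriv (c k) a) (at a)" if "k \<le> n" for k
    using coeff[OF that] by (simp add: DERIV_deriv_iff_field_differentiable)
  have "hom_poly n (\<lambda>k. deriv (c k) a) (f a) q = Dt"
    using termwise[where c = c and c' = "\<lambda>k. deriv (c k) a" and g = "\<lambda>_. f a" and g' = 0 and x = a,
        OF coeff_deriv] Dt
    by (simp add: DERIV_unique)
  moreover have "deriv (\<lambda>h. hom_poly n (\<lambda>k. c k a) h q) (f a) = Kh"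
    using termwise[where c = "\<lambda>k h. c k a" and c' = "\<lambda>k. 0" and g = "\<lambda>h. h" and g' = 1 and x = "f a"]
    unfolding Kh_def by (simp add: hom_poly_def DERIV_imp_deriv)
  ultimately show ?thesis
    using termwise[where c = c and c' = "\<lambda>k. deriv (c k) a" and g = f and g' = f' and x = a,
        OF coeff_deriv f]
    unfolding Kh_def by simp
qed

lemma sum_offdiag_swap:
  assumes "finite A"
  shows "(\<Sum>i\<in>A. \<Sum>j\<in>A - {i}. f i j) = (\<Sum>i\<in>A. \<Sum>j\<in>A - {i}. f j i)"
proof -
  have "(\<Sum>i\<in>A. \<Sum>j\<in>{j. j \<in> A \<and> i \<noteq> j}. f i j)
      = (\<Sum>j\<in>A. \<Sum>i\<in>{i. i \<in> A \<and> i \<noteq> j}. f i j)"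
    by (rule sum.swap_restrict[OF assms assms])
  moreover have "{j. j \<in> A \<and> i \<noteq> j} = A - {i}" "{j. j \<in> A \<and> j \<noteq> i} = A - {i}" for i
    by auto
  ultimately show ?thesis by simp
qed

section \<open>Poisson brackets of functions polynomial in y\<close>

definition y_free :: "(phase \<Rightarrow> real) \<Rightarrow> bool" where
  "y_free f \<longleftrightarrow> (\<forall>a y y' pa py. f (a, y, pa, py) = f (a, y', pa, py))"

lemma y_free_eq: "y_free f \<Longrightarrow> f (a, y', pa, py) = f (a, y, pa, py)"
  unfolding y_free_def by blast

lemma d_y_y_free:
  assumes "y_free f"
  shows "d_y f p = 0"
proof -
  obtain a y pa py where p: "p = (a, y, pa, py)" by (cases p)
  have "(\<lambda>t. f (a, t, pa, py)) = (\<lambda>_. f (a, y, pa, py))"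
    using assms by (auto simp: y_free_def)
  thus ?thesis by (simp add: d_y_def p)
qed

lemma poisson_y_free:
  "y_free f \<Longrightarrow> d_y K p = 0 \<Longrightarrow> poisson K f p = d_a K p * d_Pa f p - d_Pa K p * d_a f p"
  by (simp add: poisson_def d_y_y_free)

lemma y_free_const: "y_free (\<lambda>_. c)"
  by (simp add: y_free_def)

lemma poisson_const: "poisson K (\<lambda>_. c) p = 0"
  by (cases p) (simp add: poisson_def d_a_def d_y_def d_Pa_def d_Py_def)

text \<open>Since \<open>d_y K\<close> vanishes, no differentiability in \<open>P_y\<close> is needed.\<close>

lemma poisson_quadratic_in_y:
  fixes K f g h :: "phase \<Rightarrow> real"
  assumes free: "y_free f" "y_free g" "y_free h"
    and diff_a: "\<And>u. u \<in> {f, g, h} \<Longrightarrow> (\<lambda>t. u (t, y, pa, py)) field_differentiable (at a)"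
    and diff_pa: "\<And>u. u \<in> {f, g, h} \<Longrightarrow> (\<lambda>t. u (a, y, t, py)) field_differentiable (at pa)"
    and K_y: "d_y K (a, y, pa, py) = 0"
  shows "poisson K (\<lambda>(a, y, pa, py). f (a, y, pa, py) + y * g (a, y, pa, py) + y^2 / 2 * h (a, y, pa, py))
           (a, y, pa, py)
       = poisson K f (a, y, pa, py) + y * poisson K g (a, y, pa, py) + y^2 / 2 * poisson K h (a, y, pa, py)
         - d_Py K (a, y, pa, py) * (g (a, y, pa, py) + y * h (a, y, pa, py))"
proof -
  let ?p = "(a, y, pa, py)"
  let ?F = "\<lambda>(a, y, pa, py). f (a, y, pa, py) + y * g (a, y, pa, py) + y^2 / 2 * h (a, y, pa, py)"
  have da: "((\<lambda>t. u (t, y, pa, py)) has_real_derivative d_a u ?p) (at a)" if "u \<in> {f, g, h}" for u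
    using diff_a[OF that] by (simp add: d_a_def DERIV_deriv_iff_field_differentiable)
  have dpa: "((\<lambda>t. u (a, y, t, py)) has_real_derivative d_Pa u ?p) (at pa)" if "u \<in> {f, g, h}" for u
    using diff_pa[OF that] by (simp add: d_Pa_def DERIV_deriv_iff_field_differentiable)
  have "((\<lambda>t. ?F (t, y, pa, py)) has_real_derivative
      d_a f ?p + y * d_a g ?p + y^2 / 2 * d_a h ?p) (at a)"
    using da[of f] da[of g] da[of h] by (auto intro!: derivative_eq_intros)
  hence "d_a ?F ?p = d_a f ?p + y * d_a g ?p + y^2 / 2 * d_a h ?p"
    by (simp add: d_a_def DERIV_imp_deriv)
  moreover have "((\<lambda>t. ?F (a, y, t, py)) has_real_derivative
      d_Pa f ?p + y * d_Pa g ?p + y^2 / 2 * d_Pa h ?p) (at pa)"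
    using dpa[of f] dpa[of g] dpa[of h] by (auto intro!: derivative_eq_intros)
  hence "d_Pa ?F ?p = d_Pa f ?p + y * d_Pa g ?p + y^2 / 2 * d_Pa h ?p"
    by (simp add: d_Pa_def DERIV_imp_deriv)
  moreover have "((\<lambda>t. ?F (a, t, pa, py)) has_real_derivative g ?p + y * h ?p) (at y)"
  proof -
    have "?F (a, t, pa, py) = f ?p + t * g ?p + t^2 / 2 * h ?p" for t
      using y_free_eq[OF free(1), of a t pa py y] y_free_eq[OF free(2), of a t pa py y]
        y_free_eq[OF free(3), of a t pa py y]
      by simp
    thus ?thesis by (auto intro!: derivative_eq_intros)
  qed
  hence "d_y ?F ?p = g ?p + y * h ?p"
    by (simp add: d_y_def DERIV_imp_deriv)
  moreover have "d_y f ?p = 0" "d_y g ?p = 0" "d_y h ?p = 0"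
    using free by (simp_all add: d_y_y_free)
  ultimately show ?thesis
    using K_y by (simp add: poisson_def algebra_simps)
qed

section \<open>Echelon forms and density\<close>

lemma lin_indep3_echelon:
  assumes "u 1 = 0" "u 2 \<noteq> 0" "v = (\<lambda>k. if k = 0 \<or> k = 1 \<or> k = 2 then 0 else 1)" "w 1 \<noteq> 0"
  shows "lin_indep3 u v w"
  unfolding lin_indep3_def
proof (intro allI impI)
  fix c1 c2 c3 assume h: "\<forall>k<4. c1 * u k + c2 * v k + c3 * w k = 0"
  have "c3 = 0" using h[rule_format, of 1] assms by simp
  moreover have "c1 = 0" using h[rule_format, of 2] assms \<open>c3 = 0\<close> by simp
  moreover have "c2 = 0" using h[rule_format, of 3] assms \<open>c1 = 0\<close> \<open>c3 = 0\<close> by simp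
  ultimately show "c1 = 0 \<and> c2 = 0 \<and> c3 = 0" by simp
qed

lemma exists_near_avoiding_finite:
  fixes x e :: real
  assumes "finite F" and "0 < e"
  shows "\<exists>s. \<bar>s - x\<bar> < e \<and> s \<notin> F"
proof -
  have "infinite ({x<..<x + e} - F)"
    using assms by (simp add: Diff_infinite_finite)
  then obtain s where "s \<in> {x<..<x + e} - F"
    by (metis ex_in_conv finite.emptyI)
  thus ?thesis by (intro exI[of _ s]) auto
qed

lemma finite_square_preimage:
  fixes c :: real
  assumes "finite V" and "c \<noteq> 0"
  shows "finite {s. (c * s)^2 \<in> V}"
proof (rule finite_subset)
  show "{s. (c * s)^2 \<in> V} \<subseteq> (\<lambda>v. sqrt v / c) ` V \<union> (\<lambda>v. - sqrt v / c) ` V"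
  proof
    fix s assume "s \<in> {s. (c * s)^2 \<in> V}"
    moreover have "c * s = sqrt ((c * s)^2) \<or> c * s = - sqrt ((c * s)^2)" by auto
    ultimately show "s \<in> (\<lambda>v. sqrt v / c) ` V \<union> (\<lambda>v. - sqrt v / c) ` V"
      using assms(2) by (auto simp: field_simps)
  qed
qed (use assms(1) in simp)

lemma dist_phase_le:
  "dist (a, y', pa', py') (a, y, pa, py) \<le> \<bar>y' - y\<bar> + \<bar>pa' - pa\<bar> + \<bar>py' - py\<bar>"
proof -
  have "dist (a, y', pa', py') (a, y, pa, py) = norm (y' - y, pa' - pa, py' - py)"
    by (simp add: dist_Pair_Pair dist_real_def norm_Pair)
  also have "\<dots> \<le> \<bar>y' - y\<bar> + norm (pa' - pa, py' - py)"
    using norm_Pair_le[of "y' - y" "(pa' - pa, py' - py)"] by simp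
  also have "\<dots> \<le> \<bar>y' - y\<bar> + (\<bar>pa' - pa\<bar> + \<bar>py' - py\<bar>)"
    using norm_Pair_le[of "pa' - pa" "py' - py"] by simp
  finally show ?thesis by simp
qed

section \<open>Closed forms of the coefficient sums\<close>

locale superint_data =
  fixes n :: nat and r eps xi :: "nat \<Rightarrow> real" and nu :: real
begin

abbreviation N :: "nat set" where "N \<equiv> {1..n}"

definition u :: "nat \<Rightarrow> real \<Rightarrow> real" where
  "u i t = xi i / sqrt (Delta eps r i t)"

lemma hom_poly_btil:
  "hom_poly n (\<lambda>k. btil n r eps xi nu k t) h q
   = nu * root_prod r N h q - q * (\<Sum>i\<in>N. u i t * root_prod r (N - {i}) h q)"
proof -
  have "btil n r eps xi nu k t = nu * ((-1)^k * sigma n r (int k))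
          + (\<Sum>i\<in>N. u i t * ((-1)^k * sigma1 n r i (int k - 1)))" for k
    by (simp add: btil_def u_def sum_distrib_left algebra_simps)
  hence "hom_poly n (\<lambda>k. btil n r eps xi nu k t) h q
      = nu * root_prod r N h q + (\<Sum>i\<in>N. u i t * (- q * root_prod r (N - {i}) h q))"
    by (simp only: hom_poly_linear hom_poly_sigma hom_poly_sigma1_shift cong: sum.cong)
  thus ?thesis by (simp add: sum_distrib_left sum_negf algebra_simps)
qed

text \<open>The term \<open>xi i ^ 2 / Delta eps r i t\<close> is kept as it is: it equals \<open>(u i t)\<^sup>2\<close> only where
  \<open>Delta eps r i t \<ge> 0\<close>, and in this form the identity holds for every \<open>t\<close>.\<close>

lemma hom_poly_ctil:
  "hom_poly n (\<lambda>k. ctil n r eps xi nu k t) h q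
   = - (nu^2 / 2) * t * root_prod r N h q
     - nu * (\<Sum>i\<in>N. u i t * (h - t * q) * root_prod r (N - {i}) h q)
     + q / 2 * (\<Sum>i\<in>N. xi i ^ 2 / Delta eps r i t * root_prod r (N - {i}) h q)
     + q / 2 * (\<Sum>i\<in>N. \<Sum>j\<in>N - {i}. u i t * u j t * (h - t * q) * root_prod r (N - {i, j}) h q)"
proof -
  have uu: "xi i * xi j / sqrt (Delta eps r i t * Delta eps r j t) = u i t * u j t" for i j
    by (simp add: u_def real_sqrt_mult)
  let ?E = "\<lambda>k. (-1::real)^k"
  have "ctil n r eps xi nu k t = - (1/2) * (?E k * (nu^2 * t * sigma n r (int k)
      + 2 * nu * (\<Sum>i\<in>N. u i t * (sigma1 n r i (int k) + t * sigma1 n r i (int k - 1)))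
      + (\<Sum>i\<in>N. xi i ^ 2 / Delta eps r i t * sigma1 n r i (int k - 1))
      + (\<Sum>i\<in>N. \<Sum>j\<in>N - {i}. u i t * u j t
            * (sigma2 n r i j (int k - 1) + t * sigma2 n r i j (int k - 2)))))" for k
    unfolding ctil_def uu by (simp add: u_def)
  also have "\<dots>k = - (1/2) * (nu^2 * t * (?E k * sigma n r (int k))
      + 2 * nu * (\<Sum>i\<in>N. u i t * (?E k * sigma1 n r i (int k) + t * (?E k * sigma1 n r i (int k - 1))))
      + (\<Sum>i\<in>N. xi i ^ 2 / Delta eps r i t * (?E k * sigma1 n r i (int k - 1)))
      + (\<Sum>i\<in>N. \<Sum>j\<in>N - {i}. u i t * u j t
            * (?E k * sigma2 n r i j (int k - 1) + t * (?E k * sigma2 n r i j (int k - 2)))))" for k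
    by (simp add: sum_distrib_left algebra_simps)
  finally have "hom_poly n (\<lambda>k. ctil n r eps xi nu k t) h q =
      - (1/2) * (nu^2 * t * root_prod r N h q
      + 2 * nu * (\<Sum>i\<in>N. u i t * (h * root_prod r (N - {i}) h q + t * (- q * root_prod r (N - {i}) h q)))
      + (\<Sum>i\<in>N. xi i ^ 2 / Delta eps r i t * (- q * root_prod r (N - {i}) h q))
      + (\<Sum>i\<in>N. \<Sum>j\<in>N - {i}. u i t * u j t
            * (- q * h * root_prod r (N - {i, j}) h q + t * (q^2 * root_prod r (N - {i, j}) h q))))"
    by (simp only: hom_poly_linear hom_poly_sigma hom_poly_sigma1 hom_poly_sigma1_shift
        hom_poly_sigma2_shift1 hom_poly_sigma2_shift2 cong: sum.cong)
  thus ?thesis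
    by (simp add: sum_distrib_left sum_subtractf sum.distrib sum_negf power2_eq_square algebra_simps)
qed

definition du :: "nat \<Rightarrow> real \<Rightarrow> real" where
  "du i t = - xi i * eps i / (2 * Delta eps r i t * sqrt (Delta eps r i t))"

lemma has_real_derivative_Delta: "((\<lambda>t. Delta eps r i t) has_real_derivative eps i) (at a)"
  unfolding Delta_def by (auto intro!: derivative_eq_intros)

lemma has_real_derivative_u:
  assumes "Delta eps r i a > 0"
  shows "(u i has_real_derivative du i a) (at a)"
proof -
  have "(u i has_real_derivative
      - (xi i * (inverse (sqrt (Delta eps r i a)) / 2 * eps i)) / (sqrt (Delta eps r i a))^2) (at a)"
    unfolding u_def[abs_def] using assms
    by (auto intro!: derivative_eq_intros has_real_derivative_Delta DERIV_real_sqrt[THEN DERIV_chain2]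
        simp: power2_eq_square)
  thus ?thesis using assms by (simp add: du_def field_simps)
qed

lemma du_field_differentiable:
  "Delta eps r i a > 0 \<Longrightarrow> du i field_differentiable (at a)"
  unfolding field_differentiable_def du_def[abs_def]
  by (intro exI) (auto intro!: derivative_eq_intros has_real_derivative_Delta DERIV_real_sqrt[THEN DERIV_chain2])

lemma has_real_derivative_xi_sq_Delta:
  assumes "Delta eps r i a > 0"
  shows "((\<lambda>t. xi i ^ 2 / Delta eps r i t) has_real_derivative 2 * u i a * du i a) (at a)"
proof -
  have "((\<lambda>t. xi i ^ 2 / Delta eps r i t) has_real_derivative
      - (xi i ^ 2 * eps i) / (Delta eps r i a * Delta eps r i a)) (at a)"
    using assms by (auto intro!: derivative_eq_intros has_real_derivative_Delta)
  thus ?thesis using assms by (simp add: u_def du_def field_simps power2_eq_square)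
qed

text \<open>The Euler relation for \<open>u i = xi i * \<bar>a - r i\<bar> powr (-1/2)\<close>; it is what makes the
  \<open>a\<close>-derivatives of the closed forms collapse.\<close>

lemma du_root_relation:
  assumes "Delta eps r i a > 0" and "eps i = 1 \<or> eps i = -1"
  shows "du i a * (a - r i) = - u i a / 2"
  using assms by (auto simp: du_def u_def Delta_def field_simps)

lemma xdot_eq:
  assumes "\<forall>i\<in>N. Delta eps r i a > 0"
  shows "xdot n r eps xi nu a = nu / 2 + (\<Sum>i\<in>N. du i a)"
proof -
  have "(xfun n r eps xi nu has_real_derivative nu / 2 * 1 + (\<Sum>i\<in>N. du i a)) (at a)"
    unfolding xfun_def[abs_def] u_def[symmetric]
    using assms by (intro DERIV_add DERIV_cmult DERIV_ident DERIV_sum has_real_derivative_u) auto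
  thus ?thesis unfolding xdot_def by (simp add: DERIV_imp_deriv)
qed

lemma has_real_derivative_hom_poly_btil:
  assumes "\<forall>i\<in>N. Delta eps r i a > 0"
  shows "((\<lambda>t. hom_poly n (\<lambda>k. btil n r eps xi nu k t) h q) has_real_derivative
           - q * (\<Sum>i\<in>N. du i a * root_prod r (N - {i}) h q)) (at a)"
proof -
  have "((\<lambda>t. nu * root_prod r N h q - q * (\<Sum>i\<in>N. u i t * root_prod r (N - {i}) h q))
      has_real_derivative 0 - q * (\<Sum>i\<in>N. du i a * root_prod r (N - {i}) h q)) (at a)"
    using assms
    by (intro DERIV_diff DERIV_const DERIV_cmult DERIV_sum DERIV_cmult_right has_real_derivative_u) auto
  thus ?thesis by (simp add: hom_poly_btil)
qed

lemma du_root_prod_shift: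
  assumes "i \<in> N" and "Delta eps r i a > 0" and "eps i = 1 \<or> eps i = -1"
  shows "du i a * (h - a * q) * root_prod r (N - {i}) h q
         = du i a * root_prod r N h q + q / 2 * u i a * root_prod r (N - {i}) h q"
proof -
  let ?P1 = "root_prod r (N - {i}) h q"
  have "du i a * (h - a * q) * ?P1 = du i a * ((h - r i * q) * ?P1) - q * ?P1 * (du i a * (a - r i))"
    by (simp add: algebra_simps)
  also have "(h - r i * q) * ?P1 = root_prod r N h q"
    using assms(1) by (simp add: root_prod_remove)
  also have "du i a * (a - r i) = - u i a / 2"
    using assms(2,3) by (rule du_root_relation)
  finally show ?thesis by (simp add: algebra_simps)
qed

lemma du_sum_shift:
  assumes pos: "\<forall>i\<in>N. Delta eps r i a > 0" and sign: "\<forall>i\<in>N. eps i = 1 \<or> eps i = -1"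
  shows "(h - a * q) * (\<Sum>i\<in>N. du i a * root_prod r (N - {i}) h q)
         = (\<Sum>i\<in>N. du i a) * root_prod r N h q + q / 2 * (\<Sum>i\<in>N. u i a * root_prod r (N - {i}) h q)"
proof -
  have "(h - a * q) * (\<Sum>i\<in>N. du i a * root_prod r (N - {i}) h q)
      = (\<Sum>i\<in>N. du i a * (h - a * q) * root_prod r (N - {i}) h q)"
    by (simp add: sum_distrib_left algebra_simps)
  also have "\<dots> = (\<Sum>i\<in>N. du i a * root_prod r N h q + q / 2 * u i a * root_prod r (N - {i}) h q)"
    using pos sign by (intro sum.cong refl du_root_prod_shift) auto
  finally show ?thesis
    by (simp add: sum.distrib sum_distrib_left sum_distrib_right algebra_simps)
qed

lemma hom_poly_btil_identity:
  assumes pos: "\<forall>i\<in>N. Delta eps r i a > 0" and sign: "\<forall>i\<in>N. eps i = 1 \<or> eps i = -1"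
  shows "q * hom_poly n (\<lambda>k. btil n r eps xi nu k a) h q
           - 2 * (h - a * q) * (- q * (\<Sum>i\<in>N. du i a * root_prod r (N - {i}) h q))
         = 2 * xdot n r eps xi nu a * q * root_prod r N h q"
proof -
  let ?P = "root_prod r N h q" and ?P1 = "\<lambda>i. root_prod r (N - {i}) h q"
  have "q * hom_poly n (\<lambda>k. btil n r eps xi nu k a) h q - 2 * (h - a * q) * (- q * (\<Sum>i\<in>N. du i a * ?P1 i))
      = q * (nu * ?P - q * (\<Sum>i\<in>N. u i a * ?P1 i)) + 2 * q * ((h - a * q) * (\<Sum>i\<in>N. du i a * ?P1 i))"
    by (simp add: hom_poly_btil algebra_simps)
  also have "\<dots> = 2 * (nu / 2 + (\<Sum>i\<in>N. du i a)) * q * ?P"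
    unfolding du_sum_shift[OF pos sign] by (simp add: algebra_simps)
  finally show ?thesis using pos by (simp add: xdot_eq)
qed

lemma du_root_prod_pair_shift:
  assumes ij: "i \<in> N" "j \<in> N - {i}"
    and pos: "\<forall>i\<in>N. Delta eps r i a > 0" and sign: "\<forall>i\<in>N. eps i = 1 \<or> eps i = -1"
  shows "((du i a * u j a + u i a * du j a) * (h - a * q) - u i a * u j a * q)
           * root_prod r (N - {i, j}) h q
         = du i a * u j a * root_prod r (N - {j}) h q + u i a * du j a * root_prod r (N - {i}) h q"
proof -
  let ?P2 = "root_prod r (N - {i, j}) h q"
  have "N - {i} - {j} = N - {i, j}" "N - {j} - {i} = N - {i, j}" by auto
  hence Pi: "root_prod r (N - {i}) h q = (h - r j * q) * ?P2"
    and Pj: "root_prod r (N - {j}) h q = (h - r i * q) * ?P2"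
    using ij root_prod_remove[of "N - {i}" j r h q] root_prod_remove[of "N - {j}" i r h q] by auto
  have rel: "du i a * (a - r i) = - u i a / 2" "du j a * (a - r j) = - u j a / 2"
    using ij pos sign by (simp_all add: du_root_relation)
  have "du i a * u j a * root_prod r (N - {j}) h q + u i a * du j a * root_prod r (N - {i}) h q
      = ((du i a * u j a + u i a * du j a) * (h - a * q)) * ?P2
        + u j a * q * ?P2 * (du i a * (a - r i)) + u i a * q * ?P2 * (du j a * (a - r j))"
    unfolding Pi Pj by (simp add: algebra_simps)
  also have "\<dots> = ((du i a * u j a + u i a * du j a) * (h - a * q) - u i a * u j a * q) * ?P2"
    unfolding rel by (simp add: algebra_simps)
  finally show ?thesis ..
qed

lemma du_pair_sum_shift:
  assumes pos: "\<forall>i\<in>N. Delta eps r i a > 0" and sign: "\<forall>i\<in>N. eps i = 1 \<or> eps i = -1"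
  shows "(\<Sum>i\<in>N. 2 * u i a * du i a * root_prod r (N - {i}) h q)
       + (\<Sum>i\<in>N. \<Sum>j\<in>N - {i}. ((du i a * u j a + u i a * du j a) * (h - a * q) - u i a * u j a * q)
                                * root_prod r (N - {i, j}) h q)
       = 2 * (\<Sum>i\<in>N. du i a) * (\<Sum>i\<in>N. u i a * root_prod r (N - {i}) h q)"
proof -
  let ?P1 = "\<lambda>i. root_prod r (N - {i}) h q"
  have "(\<Sum>i\<in>N. \<Sum>j\<in>N - {i}. du i a * u j a * ?P1 j)
      = (\<Sum>i\<in>N. \<Sum>j\<in>N - {i}. u i a * du j a * ?P1 i)"
    using sum_offdiag_swap[of N "\<lambda>i j. du i a * u j a * ?P1 j"] by (simp add: mult_ac)
  have "(\<Sum>i\<in>N. \<Sum>j\<in>N - {i}. ((du i a * u j a + u i a * du j a) * (h - a * q) - u i a * u j a * q)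
                                * root_prod r (N - {i, j}) h q)
      = (\<Sum>i\<in>N. \<Sum>j\<in>N - {i}. du i a * u j a * ?P1 j + u i a * du j a * ?P1 i)"
    using pos sign by (intro sum.cong refl du_root_prod_pair_shift) auto
  also have "\<dots> = 2 * (\<Sum>i\<in>N. \<Sum>j\<in>N - {i}. u i a * du j a * ?P1 i)"
    unfolding sum.distrib \<open>(\<Sum>i\<in>N. \<Sum>j\<in>N - {i}. du i a * u j a * ?P1 j) = _\<close> by simp
  finally have pairs: "(\<Sum>i\<in>N. \<Sum>j\<in>N - {i}. ((du i a * u j a + u i a * du j a) * (h - a * q)
                                - u i a * u j a * q) * root_prod r (N - {i, j}) h q)
      = 2 * (\<Sum>i\<in>N. \<Sum>j\<in>N - {i}. u i a * du j a * ?P1 i)" .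
  have "(\<Sum>i\<in>N. 2 * u i a * du i a * ?P1 i) + 2 * (\<Sum>i\<in>N. \<Sum>j\<in>N - {i}. u i a * du j a * ?P1 i)
      = 2 * (\<Sum>i\<in>N. u i a * ?P1 i * (du i a + (\<Sum>j\<in>N - {i}. du j a)))"
    by (simp add: sum.distrib sum_distrib_left algebra_simps)
  also have "\<dots> = 2 * (\<Sum>i\<in>N. u i a * ?P1 i * (\<Sum>j\<in>N. du j a))"
    using sum.remove[of N _ "\<lambda>j. du j a"] by (intro arg_cong[where f = "(*) 2"] sum.cong) auto
  finally show ?thesis unfolding pairs by (simp add: sum_distrib_left sum_distrib_right algebra_simps)
qed

lemma has_real_derivative_hom_poly_ctil:
  assumes pos: "\<forall>i\<in>N. Delta eps r i a > 0" and sign: "\<forall>i\<in>N. eps i = 1 \<or> eps i = -1"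
  shows "((\<lambda>t. hom_poly n (\<lambda>k. ctil n r eps xi nu k t) h q) has_real_derivative
           - xdot n r eps xi nu a * hom_poly n (\<lambda>k. btil n r eps xi nu k a) h q) (at a)"
proof -
  let ?P = "root_prod r N h q" and ?P1 = "\<lambda>i. root_prod r (N - {i}) h q"
    and ?P2 = "\<lambda>i j. root_prod r (N - {i, j}) h q"
  have du: "\<And>i. i \<in> N \<Longrightarrow> (u i has_real_derivative du i a) (at a)"
    and dw: "\<And>i. i \<in> N \<Longrightarrow>
      ((\<lambda>t. xi i ^ 2 / Delta eps r i t) has_real_derivative 2 * u i a * du i a) (at a)"
    using pos by (simp_all add: has_real_derivative_u has_real_derivative_xi_sq_Delta)
  have D: "((\<lambda>t. hom_poly n (\<lambda>k. ctil n r eps xi nu k t) h q) has_real_derivative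
      - (nu^2 / 2) * ?P - nu * (\<Sum>i\<in>N. (du i a * (h - a * q) - u i a * q) * ?P1 i)
      + q / 2 * (\<Sum>i\<in>N. 2 * u i a * du i a * ?P1 i)
      + q / 2 * (\<Sum>i\<in>N. \<Sum>j\<in>N - {i}. ((du i a * u j a + u i a * du j a) * (h - a * q)
                                         - u i a * u j a * q) * ?P2 i j)) (at a)"
      (is "(_ has_real_derivative - (nu^2 / 2) * ?P - nu * ?A + q / 2 * ?X + q / 2 * ?Y) _")
    unfolding hom_poly_ctil
    by (rule derivative_eq_intros DERIV_sum du dw refl | simp add: algebra_simps)+
  have "?A = (h - a * q) * (\<Sum>i\<in>N. du i a * ?P1 i) - q * (\<Sum>i\<in>N. u i a * ?P1 i)"
    by (simp add: sum_distrib_left sum_subtractf sum.distrib algebra_simps)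
  hence A: "?A = (\<Sum>i\<in>N. du i a) * ?P - q / 2 * (\<Sum>i\<in>N. u i a * ?P1 i)"
    unfolding du_sum_shift[OF pos sign] by simp
  have "- (nu^2 / 2) * ?P - nu * ?A + q / 2 * ?X + q / 2 * ?Y
      = - (nu^2 / 2) * ?P - nu * ?A + q / 2 * (?X + ?Y)"
    by (simp add: algebra_simps)
  also have "\<dots> = - (nu / 2 + (\<Sum>i\<in>N. du i a)) * (nu * ?P - q * (\<Sum>i\<in>N. u i a * ?P1 i))"
    unfolding A du_pair_sum_shift[OF pos sign] by (simp add: algebra_simps power2_eq_square)
  finally have "- (nu^2 / 2) * ?P - nu * ?A + q / 2 * ?X + q / 2 * ?Y
      = - xdot n r eps xi nu a * hom_poly n (\<lambda>k. btil n r eps xi nu k a) h q"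
    using pos by (simp add: hom_poly_btil xdot_eq)
  with D show ?thesis by simp
qed

lemma btil_field_differentiable:
  assumes "\<forall>i\<in>N. Delta eps r i a > 0"
  shows "(\<lambda>t. btil n r eps xi nu k t) field_differentiable (at a)"
  unfolding field_differentiable_def btil_def using assms
  by (intro exI) (auto intro!: derivative_eq_intros has_real_derivative_Delta DERIV_real_sqrt[THEN DERIV_chain2])

lemma ctil_field_differentiable:
  assumes "\<forall>i\<in>N. Delta eps r i a > 0"
  shows "(\<lambda>t. ctil n r eps xi nu k t) field_differentiable (at a)"
proof -
  have pos: "\<And>i. Suc 0 \<le> i \<Longrightarrow> i \<le> n \<Longrightarrow> 0 < Delta eps r i a"
    using assms by auto
  show ?thesis
    unfolding field_differentiable_def ctil_def
    by (intro exI) (auto intro!: derivative_eq_intros has_real_derivative_Delta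
        DERIV_real_sqrt[THEN DERIV_chain2]; metis pos mult_pos_pos less_asym less_irrefl)
qed

end

section \<open>Poisson brackets with the Hamiltonian\<close>

locale superint = superint_data +
  fixes I :: "real set"
  assumes eps_sign: "\<forall>i\<in>{1..n}. eps i = 1 \<or> eps i = -1"
    and open_I: "open I" and I_pos: "I \<subseteq> {0<..}"
    and Delta_pos: "\<forall>a\<in>I. \<forall>i\<in>{1..n}. Delta eps r i a > 0"
    and xdot_nonzero: "\<forall>a\<in>I. xdot n r eps xi nu a \<noteq> 0"
begin

abbreviation H :: "phase \<Rightarrow> real" where "H \<equiv> HF n r eps xi nu"
abbreviation G :: "phase \<Rightarrow> real" where "G \<equiv> GF n r eps xi nu"
abbreviation Q1 :: "phase \<Rightarrow> real" where "Q1 \<equiv> Q1F n r eps xi nu"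
abbreviation Q2 :: "phase \<Rightarrow> real" where "Q2 \<equiv> Q2F n r eps xi nu"
abbreviation S1 :: "phase \<Rightarrow> real" where "S1 \<equiv> S1F n r eps xi nu"
abbreviation S2 :: "phase \<Rightarrow> real" where "S2 \<equiv> S2F n r eps xi nu"

definition phi :: "real \<Rightarrow> real" where
  "phi t = t / xdot n r eps xi nu t"

lemma xdot_field_differentiable:
  assumes "a \<in> I"
  shows "xdot n r eps xi nu field_differentiable (at a)"
proof -
  have "(\<lambda>t. nu / 2 + (\<Sum>i\<in>N. du i t)) field_differentiable (at a)"
    using assms Delta_pos by (intro field_differentiable_add field_differentiable_sum
        field_differentiable_const du_field_differentiable) auto
  then obtain D where "((\<lambda>t. nu / 2 + (\<Sum>i\<in>N. du i t)) has_real_derivative D) (at a)"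
    unfolding field_differentiable_def by blast
  hence "(xdot n r eps xi nu has_real_derivative D) (at a)"
    by (rule has_field_derivative_transform_within_open[OF _ open_I assms])
      (use Delta_pos xdot_eq in auto)
  thus ?thesis unfolding field_differentiable_def by blast
qed

lemma has_real_derivative_phi:
  assumes "a \<in> I"
  shows "(phi has_real_derivative deriv phi a) (at a)"
proof -
  obtain D where "(xdot n r eps xi nu has_real_derivative D) (at a)"
    using xdot_field_differentiable[OF assms] by (auto simp: field_differentiable_def)
  hence "phi field_differentiable (at a)"
    unfolding field_differentiable_def phi_def[abs_def] using assms xdot_nonzero
    by (auto intro!: derivative_eq_intros)
  thus ?thesis by (simp add: DERIV_deriv_iff_field_differentiable)
qed

lemma HF_eq: "H (t, y, pa, py) = (phi t * pa)^2 + t * py^2"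
  by (simp add: HF_def PiF_def phi_def)

lemma GF_eq: "G (t, y, pa, py) = py * hom_poly n (\<lambda>k. Acoef n r (n - k)) (H (t, y, pa, py)) (py^2)"
  by (simp add: GF_def Py_def hom_poly_def sum_distrib_left power_add algebra_simps flip: power_mult)

lemma Q1F_eq:
  "Q1 (t, y, pa, py) = phi t * pa * hom_poly n (\<lambda>k. btil n r eps xi nu k t) (H (t, y, pa, py)) (py^2)"
  by (simp add: Q1F_def PiF_def phi_def hom_poly_def sum_distrib_left power_add algebra_simps flip: power_mult)

lemma Q2F_eq:
  "Q2 (t, y, pa, py) = py * hom_poly n (\<lambda>k. ctil n r eps xi nu k t) (H (t, y, pa, py)) (py^2)"
  by (simp add: Q2F_def hom_poly_def sum_distrib_left power_add algebra_simps flip: power_mult)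

lemma y_free_GF: "y_free G" and y_free_Q1F: "y_free Q1" and y_free_Q2F: "y_free Q2"
  by (simp_all add: y_free_def GF_eq Q1F_eq Q2F_eq HF_eq)

lemma HF_has_derivative:
  assumes "a \<in> I"
  shows "((\<lambda>t. H (t, y, pa, py)) has_real_derivative 2 * (phi a * pa) * (deriv phi a * pa) + py^2) (at a)"
    and "((\<lambda>s. H (a, y, s, py)) has_real_derivative 2 * (phi a * pa) * phi a) (at pa)"
  using has_real_derivative_phi[OF assms] unfolding HF_eq
  by (auto intro!: derivative_eq_intros simp: power2_eq_square algebra_simps)

lemma HF_partials:
  assumes "a \<in> I"
  shows "d_a H (a, y, pa, py) = 2 * (phi a * pa) * (deriv phi a * pa) + py^2"
    and "d_Pa H (a, y, pa, py) = 2 * (phi a * pa) * phi a"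
    and "d_y H (a, y, pa, py) = 0"
    and "d_Py H (a, y, pa, py) = 2 * a * py"
proof -
  show "d_a H (a, y, pa, py) = 2 * (phi a * pa) * (deriv phi a * pa) + py^2"
    and "d_Pa H (a, y, pa, py) = 2 * (phi a * pa) * phi a"
    unfolding d_a_def d_Pa_def using HF_has_derivative[OF assms] by (simp_all add: DERIV_imp_deriv)
  show "d_y H (a, y, pa, py) = 0" and "d_Py H (a, y, pa, py) = 2 * a * py"
    unfolding d_y_def d_Py_def HF_eq by (auto intro!: DERIV_imp_deriv derivative_eq_intros)
qed

lemma has_real_derivative_hom_poly_HF:
  assumes "a \<in> I" and coeff: "\<And>k. k \<le> n \<Longrightarrow> c k field_differentiable (at a)"
    and Dt: "((\<lambda>t. hom_poly n (\<lambda>k. c k t) (H (a, y, pa, py)) (py^2)) has_real_derivative Dt) (at a)"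
  defines "Kh \<equiv> deriv (\<lambda>h. hom_poly n (\<lambda>k. c k a) h (py^2)) (H (a, y, pa, py))"
  shows "((\<lambda>t. hom_poly n (\<lambda>k. c k t) (H (t, y, pa, py)) (py^2)) has_real_derivative
           Dt + Kh * d_a H (a, y, pa, py)) (at a)"
    and "((\<lambda>s. hom_poly n (\<lambda>k. c k a) (H (a, y, s, py)) (py^2)) has_real_derivative
           Kh * d_Pa H (a, y, pa, py)) (at pa)"
proof -
  have Ha: "((\<lambda>t. H (t, y, pa, py)) has_real_derivative d_a H (a, y, pa, py)) (at a)"
    and HPa: "((\<lambda>s. H (a, y, s, py)) has_real_derivative d_Pa H (a, y, pa, py)) (at pa)"
    using HF_has_derivative[OF assms(1)] by (simp_all add: HF_partials[OF assms(1)])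
  show "((\<lambda>t. hom_poly n (\<lambda>k. c k t) (H (t, y, pa, py)) (py^2)) has_real_derivative
           Dt + Kh * d_a H (a, y, pa, py)) (at a)"
    unfolding Kh_def by (rule has_real_derivative_hom_poly[OF coeff Dt Ha])
  have "((\<lambda>s. hom_poly n (\<lambda>k. c k a) (H (a, y, s, py)) (py^2)) has_real_derivative
           0 + Kh * d_Pa H (a, y, pa, py)) (at pa)"
    unfolding Kh_def by (rule has_real_derivative_hom_poly[OF _ _ HPa]) auto
  thus "((\<lambda>s. hom_poly n (\<lambda>k. c k a) (H (a, y, s, py)) (py^2)) has_real_derivative
           Kh * d_Pa H (a, y, pa, py)) (at pa)"
    by simp
qed

lemma GF_has_derivative:
  fixes a y pa py :: real
  assumes "a \<in> I"
  defines "Kh \<equiv> deriv (\<lambda>h. hom_poly n (\<lambda>k. Acoef n r (n - k)) h (py^2)) (H (a, y, pa, py))"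
  shows "((\<lambda>t. G (t, y, pa, py)) has_real_derivative py * (Kh * d_a H (a, y, pa, py))) (at a)"
    and "((\<lambda>s. G (a, y, s, py)) has_real_derivative py * (Kh * d_Pa H (a, y, pa, py))) (at pa)"
  unfolding GF_eq Kh_def
  using has_real_derivative_hom_poly_HF[where c = "\<lambda>k t. Acoef n r (n - k)" and y = y and pa = pa
      and py = py, OF assms(1) field_differentiable_const DERIV_const]
  by (auto intro!: DERIV_cmult)

lemma Q1F_has_derivative:
  fixes a y pa py :: real
  assumes "a \<in> I"
  defines "B \<equiv> hom_poly n (\<lambda>k. btil n r eps xi nu k a) (H (a, y, pa, py)) (py^2)"
    and "Bt \<equiv> - (py^2) * (\<Sum>i\<in>N. du i a * root_prod r (N - {i}) (H (a, y, pa, py)) (py^2))"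
    and "Kh \<equiv> deriv (\<lambda>h. hom_poly n (\<lambda>k. btil n r eps xi nu k a) h (py^2)) (H (a, y, pa, py))"
  shows "((\<lambda>t. Q1 (t, y, pa, py)) has_real_derivative
           deriv phi a * pa * B + (Bt + Kh * d_a H (a, y, pa, py)) * (phi a * pa)) (at a)"
    and "((\<lambda>s. Q1 (a, y, s, py)) has_real_derivative
           phi a * 1 * B + Kh * d_Pa H (a, y, pa, py) * (phi a * pa)) (at pa)"
proof -
  have pos: "\<forall>i\<in>N. Delta eps r i a > 0" using Delta_pos assms(1) by auto
  note block = has_real_derivative_hom_poly_HF[where c = "btil n r eps xi nu" and y = y and pa = pa
      and py = py, OF assms(1) btil_field_differentiable[OF pos] has_real_derivative_hom_poly_btil[OF pos]]
  show "((\<lambda>t. Q1 (t, y, pa, py)) has_real_derivative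
           deriv phi a * pa * B + (Bt + Kh * d_a H (a, y, pa, py)) * (phi a * pa)) (at a)"
    unfolding Q1F_eq B_def Bt_def Kh_def
    by (rule DERIV_mult[OF DERIV_cmult_right[OF has_real_derivative_phi[OF assms(1)]] block(1)])
  show "((\<lambda>s. Q1 (a, y, s, py)) has_real_derivative
           phi a * 1 * B + Kh * d_Pa H (a, y, pa, py) * (phi a * pa)) (at pa)"
    unfolding Q1F_eq B_def Kh_def by (rule DERIV_mult[OF DERIV_cmult[OF DERIV_ident] block(2)])
qed

lemma Q2F_has_derivative:
  fixes a y pa py :: real
  assumes "a \<in> I"
  defines "B \<equiv> hom_poly n (\<lambda>k. btil n r eps xi nu k a) (H (a, y, pa, py)) (py^2)"
    and "Kh \<equiv> deriv (\<lambda>h. hom_poly n (\<lambda>k. ctil n r eps xi nu k a) h (py^2)) (H (a, y, pa, py))"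
  shows "((\<lambda>t. Q2 (t, y, pa, py)) has_real_derivative
           py * (- xdot n r eps xi nu a * B + Kh * d_a H (a, y, pa, py))) (at a)"
    and "((\<lambda>s. Q2 (a, y, s, py)) has_real_derivative py * (Kh * d_Pa H (a, y, pa, py))) (at pa)"
proof -
  have pos: "\<forall>i\<in>N. Delta eps r i a > 0" using Delta_pos assms(1) by auto
  show "((\<lambda>t. Q2 (t, y, pa, py)) has_real_derivative
           py * (- xdot n r eps xi nu a * B + Kh * d_a H (a, y, pa, py))) (at a)"
    and "((\<lambda>s. Q2 (a, y, s, py)) has_real_derivative py * (Kh * d_Pa H (a, y, pa, py))) (at pa)"
    unfolding Q2F_eq B_def Kh_def
    by (rule DERIV_cmult, rule has_real_derivative_hom_poly_HF[OF assms(1) ctil_field_differentiable[OF pos]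
          has_real_derivative_hom_poly_ctil[OF pos eps_sign]])+
qed

lemma GF_Q1F_Q2F_field_differentiable:
  assumes "a \<in> I" and "f \<in> {G, Q1, Q2}"
  shows "(\<lambda>t. f (t, y, pa, py)) field_differentiable (at a)"
    and "(\<lambda>s. f (a, y, s, py)) field_differentiable (at pa)"
  using assms(2) GF_has_derivative[OF assms(1)] Q1F_has_derivative[OF assms(1)] Q2F_has_derivative[OF assms(1)]
  unfolding field_differentiable_def by blast+

lemma poisson_HF_GF:
  assumes "a \<in> I"
  shows "poisson H G (a, y, pa, py) = 0"
  using GF_has_derivative[where y = y and pa = pa and py = py, OF assms]
  by (simp add: poisson_y_free y_free_GF HF_partials(3)[OF assms] d_a_def d_Pa_def DERIV_imp_deriv)

lemma phi_xdot: "a \<in> I \<Longrightarrow> phi a * xdot n r eps xi nu a = a"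
  using xdot_nonzero by (simp add: phi_def)

lemma poisson_HF_Q1F:
  assumes "a \<in> I"
  shows "poisson H Q1 (a, y, pa, py) = 2 * a * py * G (a, y, pa, py)"
proof -
  let ?p = "(a, y, pa, py)" and ?q = "py^2"
  let ?B = "hom_poly n (\<lambda>k. btil n r eps xi nu k a) (H ?p) ?q"
    and ?Bt = "- ?q * (\<Sum>i\<in>N. du i a * root_prod r (N - {i}) (H ?p) ?q)"
    and ?Kh = "deriv (\<lambda>h. hom_poly n (\<lambda>k. btil n r eps xi nu k a) h ?q) (H ?p)"
  have pos: "\<forall>i\<in>N. Delta eps r i a > 0" using Delta_pos assms by auto
  note Q1F_has_derivative[where y = y and pa = pa and py = py, OF assms]
  hence "poisson H Q1 ?p
      = d_a H ?p * (phi a * ?B + ?Kh * d_Pa H ?p * (phi a * pa))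
        - d_Pa H ?p * (deriv phi a * pa * ?B + (?Bt + ?Kh * d_a H ?p) * (phi a * pa))"
    by (simp add: poisson_y_free y_free_Q1F HF_partials(3)[OF assms] d_a_def d_Pa_def DERIV_imp_deriv)
  also have "\<dots> = phi a * (?q * ?B - 2 * (H ?p - a * ?q) * ?Bt)"
    by (simp add: HF_partials[OF assms] HF_eq algebra_simps power2_eq_square)
  also have "\<dots> = 2 * (phi a * xdot n r eps xi nu a) * ?q * root_prod r N (H ?p) ?q"
    using hom_poly_btil_identity[OF pos eps_sign] by simp
  also have "\<dots> = 2 * a * py * G ?p"
    by (simp add: phi_xdot[OF assms] GF_eq hom_poly_Acoef power2_eq_square)
  finally show ?thesis .
qed

lemma poisson_HF_Q2F:
  assumes "a \<in> I"
  shows "poisson H Q2 (a, y, pa, py) = 2 * a * py * Q1 (a, y, pa, py)"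
proof -
  let ?p = "(a, y, pa, py)" and ?q = "py^2"
  let ?B = "hom_poly n (\<lambda>k. btil n r eps xi nu k a) (H ?p) ?q"
    and ?Kh = "deriv (\<lambda>h. hom_poly n (\<lambda>k. ctil n r eps xi nu k a) h ?q) (H ?p)"
  note Q2F_has_derivative[where y = y and pa = pa and py = py, OF assms]
  hence "poisson H Q2 ?p
      = d_a H ?p * (py * (?Kh * d_Pa H ?p)) - d_Pa H ?p * (py * (- xdot n r eps xi nu a * ?B + ?Kh * d_a H ?p))"
    by (simp add: poisson_y_free y_free_Q2F HF_partials(3)[OF assms] d_a_def d_Pa_def DERIV_imp_deriv)
  also have "\<dots> = 2 * (phi a * xdot n r eps xi nu a) * py * (phi a * pa * ?B)"
    by (simp add: HF_partials[OF assms] algebra_simps)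
  also have "\<dots> = 2 * a * py * Q1 ?p"
    by (simp add: phi_xdot[OF assms] Q1F_eq)
  finally show ?thesis .
qed

lemma poisson_HF_Py:
  assumes "a \<in> I"
  shows "poisson H Py (a, y, pa, py) = 0"
proof -
  have "d_a Py (a, y, pa, py) = 0" "d_y Py (a, y, pa, py) = 0" "d_Pa Py (a, y, pa, py) = 0"
    by (simp_all add: d_a_def d_y_def d_Pa_def Py_def)
  thus ?thesis by (simp add: poisson_def HF_partials[OF assms])
qed

lemma poisson_HF_S1F:
  assumes "a \<in> I"
  shows "poisson H (S1) (a, y, pa, py) = 0"
proof -
  have "S1 = (\<lambda>(a, y, pa, py). Q1 (a, y, pa, py) + y * G (a, y, pa, py) + y^2 / 2 * 0)"
    by (simp add: fun_eq_iff S1F_def)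
  moreover have "poisson H (\<lambda>(a, y, pa, py). Q1 (a, y, pa, py) + y * G (a, y, pa, py) + y^2 / 2 * 0) (a, y, pa, py)
      = poisson H Q1 (a, y, pa, py) + y * poisson H G (a, y, pa, py) + y^2 / 2 * poisson H (\<lambda>_. 0) (a, y, pa, py)
        - d_Py H (a, y, pa, py) * (G (a, y, pa, py) + y * 0)"
  proof (rule poisson_quadratic_in_y[where h = "\<lambda>_. 0"])
    fix u :: "phase \<Rightarrow> real" assume "u \<in> {Q1, G, \<lambda>_. 0}"
    thus "(\<lambda>t. u (t, y, pa, py)) field_differentiable (at a)"
      and "(\<lambda>t. u (a, y, t, py)) field_differentiable (at pa)"
      using GF_Q1F_Q2F_field_differentiable[OF assms] by auto
  qed (simp_all add: y_free_Q1F y_free_GF y_free_const HF_partials[OF assms])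
  ultimately show ?thesis
    using assms by (simp add: poisson_HF_Q1F poisson_HF_GF poisson_const HF_partials)
qed

lemma poisson_HF_S2F:
  assumes "a \<in> I"
  shows "poisson H (S2) (a, y, pa, py) = 0"
proof -
  have "S2 = (\<lambda>(a, y, pa, py). Q2 (a, y, pa, py) + y * Q1 (a, y, pa, py) + y^2 / 2 * G (a, y, pa, py))"
    by (simp add: fun_eq_iff S2F_def)
  moreover have "poisson H (\<lambda>(a, y, pa, py). Q2 (a, y, pa, py) + y * Q1 (a, y, pa, py) + y^2 / 2 * G (a, y, pa, py))
        (a, y, pa, py)
      = poisson H Q2 (a, y, pa, py) + y * poisson H Q1 (a, y, pa, py) + y^2 / 2 * poisson H G (a, y, pa, py)
        - d_Py H (a, y, pa, py) * (Q1 (a, y, pa, py) + y * G (a, y, pa, py))"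
  proof (rule poisson_quadratic_in_y)
    fix u :: "phase \<Rightarrow> real" assume "u \<in> {Q2, Q1, G}"
    thus "(\<lambda>t. u (t, y, pa, py)) field_differentiable (at a)"
      and "(\<lambda>t. u (a, y, t, py)) field_differentiable (at pa)"
      using GF_Q1F_Q2F_field_differentiable[OF assms] by auto
  qed (simp_all add: y_free_Q2F y_free_Q1F y_free_GF HF_partials[OF assms])
  ultimately show ?thesis
    using assms by (simp add: poisson_HF_Q2F poisson_HF_Q1F poisson_HF_GF HF_partials algebra_simps)
qed

section \<open>Functional independence\<close>

lemma phi_nonzero: "a \<in> I \<Longrightarrow> phi a \<noteq> 0"
  using I_pos xdot_nonzero by (auto simp: phi_def)

lemma GF_eq_prod:
  "G (a, y, pa, py) = py * (\<Prod>i\<in>N. (phi a * pa)^2 + (a - r i) * py^2)"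
  by (simp add: GF_eq hom_poly_Acoef root_prod_def HF_eq algebra_simps)

lemma S1F_y_shift:
  "S1 (a, y', pa, py) = S1 (a, y, pa, py) + (y' - y) * G (a, y, pa, py)"
  using y_free_eq[OF y_free_Q1F, of a y' pa py y] y_free_eq[OF y_free_GF, of a y' pa py y]
  by (simp add: S1F_def algebra_simps)

lemma dense_regular_points:
  assumes "a \<in> I" and "0 < e"
  shows "\<exists>y' pa' py'. pa' \<noteq> 0 \<and> G (a, y', pa', py') \<noteq> 0
           \<and> S1 (a, y', pa', py') \<noteq> 0
           \<and> dist (a, y', pa', py') (a, y, pa, py) < e"
proof -
  obtain py' where py': "\<bar>py' - py\<bar> < e / 3" "py' \<noteq> 0"
    using exists_near_avoiding_finite[of "{0}" "e / 3" py] assms(2) by auto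
  let ?V = "(\<lambda>i. (r i - a) * py'^2) ` N"
  have "finite ({0} \<union> {s. (phi a * s)^2 \<in> ?V})"
    using finite_square_preimage phi_nonzero[OF assms(1)] by simp
  from exists_near_avoiding_finite[OF this, of "e / 3" pa] assms(2)
  obtain pa' where pa': "\<bar>pa' - pa\<bar> < e / 3" "pa' \<noteq> 0" "(phi a * pa')^2 \<notin> ?V"
    by auto
  have G: "G (a, y, pa', py') \<noteq> 0" for y
  proof -
    have "(phi a * pa')^2 + (a - r i) * py'^2 \<noteq> 0" if "i \<in> N" for i
      using pa'(3) that by (auto simp: algebra_simps)
    thus ?thesis using py'(2) by (simp add: GF_eq_prod)
  qed
  obtain y' where y': "\<bar>y' - y\<bar> < e / 3" "S1 (a, y', pa', py') \<noteq> 0"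
  proof (cases "S1 (a, y, pa', py') = 0")
    case True
    hence "S1 (a, y + e / 6, pa', py') = e / 6 * G (a, y, pa', py')"
      using S1F_y_shift[of a "y + e / 6" pa' py' y] by simp
    moreover have "e / 6 * G (a, y, pa', py') \<noteq> 0"
      using G[of y] assms(2) by simp
    ultimately have "S1 (a, y + e / 6, pa', py') \<noteq> 0"
      by metis
    moreover have "\<bar>(y + e / 6) - y\<bar> < e / 3" using assms(2) by simp
    ultimately show ?thesis using that by blast
  next
    case False
    thus ?thesis using that[of y] assms(2) by simp
  qed
  have "dist (a, y', pa', py') (a, y, pa, py) < e"
    using dist_phase_le[of a y' pa' py' y pa py] y'(1) pa'(1) py'(1) by linarith
  thus ?thesis using pa'(2) G y'(2) by blast
qed

lemma d_y_S1F: "d_y (S1) (a, y, pa, py) = G (a, y, pa, py)"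
proof -
  have "((\<lambda>t. S1 (a, y, pa, py) + (t - y) * G (a, y, pa, py)) has_real_derivative
      G (a, y, pa, py)) (at y)"
    by (auto intro!: derivative_eq_intros)
  moreover have "(\<lambda>t. S1 (a, t, pa, py))
      = (\<lambda>t. S1 (a, y, pa, py) + (t - y) * G (a, y, pa, py))"
    by (rule ext) (rule S1F_y_shift)
  ultimately have "((\<lambda>t. S1 (a, t, pa, py)) has_real_derivative G (a, y, pa, py)) (at y)"
    by simp
  thus ?thesis by (simp add: d_y_def DERIV_imp_deriv)
qed

lemma d_y_S2F: "d_y (S2) (a, y, pa, py) = S1 (a, y, pa, py)"
proof -
  have "S2 (a, t, pa, py)
      = Q2 (a, y, pa, py) + t * Q1 (a, y, pa, py) + t^2 / 2 * G (a, y, pa, py)" for t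
    using y_free_eq[OF y_free_Q2F, of a t pa py y] y_free_eq[OF y_free_Q1F, of a t pa py y]
      y_free_eq[OF y_free_GF, of a t pa py y]
    by (simp add: S2F_def)
  hence "((\<lambda>t. S2 (a, t, pa, py)) has_real_derivative
      Q1 (a, y, pa, py) + y * G (a, y, pa, py)) (at y)"
    by (auto intro!: derivative_eq_intros)
  thus ?thesis by (simp add: d_y_def DERIV_imp_deriv S1F_def)
qed

lemma grad_Py: "grad Py p = (\<lambda>k. if k = 0 \<or> k = 1 \<or> k = 2 then 0 else 1)"
  by (cases p) (simp add: fun_eq_iff grad_def d_a_def d_y_def d_Pa_def d_Py_def Py_def)

lemma fun_indep3_HF_Py:
  assumes S: "S = S1 \<or> S = S2"
  shows "fun_indep3 (I \<times> UNIV) H Py S"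
  unfolding fun_indep3_def
proof
  fix p assume "p \<in> I \<times> (UNIV :: (real \<times> real \<times> real) set)"
  then obtain a y pa py where p: "p = (a, y, pa, py)" and a: "a \<in> I" by auto
  show "p \<in> closure {p \<in> I \<times> UNIV. lin_indep3 (grad H p) (grad Py p) (grad S p)}"
    unfolding closure_approachable
  proof (intro allI impI)
    fix e :: real assume "0 < e"
    then obtain y' pa' py' where reg: "pa' \<noteq> 0" "G (a, y', pa', py') \<noteq> 0"
        "S1 (a, y', pa', py') \<noteq> 0" "dist (a, y', pa', py') (a, y, pa, py) < e"
      using dense_regular_points[OF a] by blast
    have "lin_indep3 (grad H (a, y', pa', py')) (grad Py (a, y', pa', py')) (grad S (a, y', pa', py'))"
      using reg S phi_nonzero[OF a]
      by (intro lin_indep3_echelon) (auto simp: grad_def HF_partials[OF a] grad_Py d_y_S1F d_y_S2F)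
    thus "\<exists>p'\<in>{p \<in> I \<times> UNIV. lin_indep3 (grad H p) (grad Py p) (grad S p)}. dist p' p < e"
      using a reg(4) p by force
  qed
qed

end

theorem theorem2:
  fixes n :: nat and r eps xi :: "nat \<Rightarrow> real" and nu :: real and I :: "real set"
  assumes "n \<ge> 1"
    and "inj_on r {1..n}"
    and "\<forall>i\<in>{1..n}. eps i = 1 \<or> eps i = -1"
    and "open I" and "is_interval I" and "I \<noteq> {}" and "I \<subseteq> {0<..}"
    and "\<forall>a\<in>I. \<forall>i\<in>{1..n}. Delta eps r i a > 0"
    and "\<forall>a\<in>I. xdot n r eps xi nu a \<noteq> 0"
  shows "(\<forall>p\<in>I \<times> UNIV. poisson (HF n r eps xi nu) Py p = 0
                      \<and> poisson (HF n r eps xi nu) (S1F n r eps xi nu) p = 0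
                      \<and> poisson (HF n r eps xi nu) (S2F n r eps xi nu) p = 0)
       \<and> fun_indep3 (I \<times> UNIV) (HF n r eps xi nu) Py (S1F n r eps xi nu)
       \<and> fun_indep3 (I \<times> UNIV) (HF n r eps xi nu) Py (S2F n r eps xi nu)"
proof -
  \<comment> \<open>The identities are polynomial in the roots.\<close>
  interpret superint n r eps xi nu I
    using assms by unfold_locales auto
  show ?thesis
    using poisson_HF_Py poisson_HF_S1F poisson_HF_S2F fun_indep3_HF_Py by auto
qed

end
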